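(* There exists a constant $C_\Gamma$ depending only on $\Gamma$ such that, for $n$ large enough and every realization, $$\sup_{t\in[0,T]}\|C^n_t\|_{-3}\le T\,C_\Gamma\big(S_n^{(ij,ik)}+S_n^{(ij,jk)}\big),$$ where $\|\cdot\|_{-3}$ is the norm of $H^{-3}(\mathbb T^2)$.
   Context: $\mathbb T=\mathbb R/2\pi\mathbb Z$, $\Gamma\in C^\infty(\mathbb T^2)$, $T>0$. For $n\ge2$, $p_n\in(0,1]$, $\xi^{(n)}_{ij}\in\{0,1\}$, $\hat\xi^{(n)}_{ij}=\xi^{(n)}_{ij}/p_n-1$. Let $t\mapsto(\theta^{1,n}_t,\dots,\theta^{n,n}_t)$ be continuous $\mathbb T^n$-valued paths (e.g. the solution of $d\theta^{i,n}_t=\frac1{np_n}\sum_j\xi^{(n)}_{ij}\Gamma(\theta^{i,n}_t,\theta^{j,n}_t)dt+dB^i_t$). For test functions $g$ on $\mathbb T^2$, $C^n_t(g)=\int_0^t\frac1{n^3}\sum_{i,j,k}\hat\xi^{(n)}_{ij}\hat\xi^{(n)}_{ik}\partial_{\theta_1}g(\theta^{i,n}_s,\theta^{j,n}_s)\Gamma(\theta^{i,n}_s,\theta^{k,n}_s)ds+\int_0^t\frac1{n^3}\sum_{i,j,k}\hat\xi^{(n)}_{ij}\hat\xi^{(n)}_{jk}\partial_{\theta_2}g(\theta^{i,n}_s,\theta^{j,n}_s)\Gamma(\theta^{j,n}_s,\theta^{k,n}_s)ds$. Define $S_n^{(ij,ik)}=\sup_{r,s,t\in\{\pm1\}^n}\big|\frac1{n^3}\sum_{i,j,k}\hat\xi^{(n)}_{ij}\hat\xi^{(n)}_{ik}r_is_jt_k\big|$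 and $S_n^{(ij,jk)}=\sup_{r,s,t\in\{\pm1\}^n}\big|\frac1{n^3}\sum_{i,j,k}\hat\xi^{(n)}_{ij}\hat\xi^{(n)}_{jk}r_is_jt_k\big|$. *)

theory Defs
  imports "HOL-Analysis.Analysis"
begin

text \<open>Functions on the torus T^2 are represented as 2pi-periodic functions on R x R.\<close>

definition d1 :: "(real \<times> real \<Rightarrow> real) \<Rightarrow> real \<times> real \<Rightarrow> real" where
  "d1 g = (\<lambda>(x, y). deriv (\<lambda>u. g (u, y)) x)"

definition d2 :: "(real \<times> real \<Rightarrow> real) \<Rightarrow> real \<times> real \<Rightarrow> real" where
  "d2 g = (\<lambda>(x, y). deriv (\<lambda>v. g (x, v)) y)"

text \<open>Iterated partial derivative: True = derivative in the first variable, False = second.\<close>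
fun pd :: "bool list \<Rightarrow> (real \<times> real \<Rightarrow> real) \<Rightarrow> real \<times> real \<Rightarrow> real" where
  "pd [] g = g"
| "pd (True # ds) g = d1 (pd ds g)"
| "pd (False # ds) g = d2 (pd ds g)"

definition pdiff :: "nat \<Rightarrow> nat \<Rightarrow> (real \<times> real \<Rightarrow> real) \<Rightarrow> real \<times> real \<Rightarrow> real" where
  "pdiff a b g = pd (replicate a True @ replicate b False) g"

definition periodic_T2 :: "(real \<times> real \<Rightarrow> real) \<Rightarrow> bool" where
  "periodic_T2 g \<longleftrightarrow> (\<forall>x y. g (x + 2*pi, y) = g (x, y) \<and> g (x, y + 2*pi) = g (x, y))"

definition smooth_T2 :: "(real \<times> real \<Rightarrow> real) \<Rightarrow> bool" where
  "smooth_T2 g \<longleftrightarrow> periodic_T2 g \<and>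
     (\<forall>ds. continuous_on UNIV (pd ds g) \<and>
        (\<forall>x y. (\<lambda>u. pd ds g (u, y)) differentiable (at x) \<and>
               (\<lambda>v. pd ds g (x, v)) differentiable (at y)))"

definition H3_norm :: "(real \<times> real \<Rightarrow> real) \<Rightarrow> real" where
  "H3_norm g = sqrt (\<Sum>a\<le>3. \<Sum>b\<le>3 - a.
       integral (cbox (0, 0) (2*pi, 2*pi)) (\<lambda>z. (pdiff a b g z)\<^sup>2))"

definition Hm3_norm :: "((real \<times> real \<Rightarrow> real) \<Rightarrow> real) \<Rightarrow> ereal" where
  "Hm3_norm L = (SUP g \<in> {g. smooth_T2 g \<and> H3_norm g \<le> 1}. ereal \<bar>L g\<bar>)"

definition xhat :: "real \<Rightarrow> (nat \<Rightarrow> nat \<Rightarrow> real) \<Rightarrow> nat \<Rightarrow> nat \<Rightarrow> real" where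
  "xhat p \<xi> i j = \<xi> i j / p - 1"

definition signs :: "nat \<Rightarrow> (nat \<Rightarrow> real) set" where
  "signs n = PiE {..<n} (\<lambda>_. {-1, 1})"

definition S_ijik :: "nat \<Rightarrow> real \<Rightarrow> (nat \<Rightarrow> nat \<Rightarrow> real) \<Rightarrow> real" where
  "S_ijik n p \<xi> = Sup ((\<lambda>(r, s, t). \<bar>1 / real n ^ 3 *
      (\<Sum>i<n. \<Sum>j<n. \<Sum>k<n. xhat p \<xi> i j * xhat p \<xi> i k * r i * s j * t k)\<bar>)
      ` (signs n \<times> signs n \<times> signs n))"

definition S_ijjk :: "nat \<Rightarrow> real \<Rightarrow> (nat \<Rightarrow> nat \<Rightarrow> real) \<Rightarrow> real" where
  "S_ijjk n p \<xi> = Sup ((\<lambda>(r, s, t). \<bar>1 / real n ^ 3 *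
      (\<Sum>i<n. \<Sum>j<n. \<Sum>k<n. xhat p \<xi> i j * xhat p \<xi> j k * r i * s j * t k)\<bar>)
      ` (signs n \<times> signs n \<times> signs n))"

text \<open>C^n_t(g); theta i s is (a real lift of) the position of particle i at time s.\<close>
definition Cn :: "nat \<Rightarrow> real \<Rightarrow> (nat \<Rightarrow> nat \<Rightarrow> real) \<Rightarrow> (nat \<Rightarrow> real \<Rightarrow> real)
    \<Rightarrow> (real \<times> real \<Rightarrow> real) \<Rightarrow> real \<Rightarrow> (real \<times> real \<Rightarrow> real) \<Rightarrow> real" where
  "Cn n p \<xi> \<theta> \<Gamma> t g =
     integral {0..t} (\<lambda>s. 1 / real n ^ 3 * (\<Sum>i<n. \<Sum>j<n. \<Sum>k<n.
        xhat p \<xi> i j * xhat p \<xi> i k * pdiff 1 0 g (\<theta> i s, \<theta> j s) * \<Gamma> (\<theta> i s, \<theta> k s)))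
   + integral {0..t} (\<lambda>s. 1 / real n ^ 3 * (\<Sum>i<n. \<Sum>j<n. \<Sum>k<n.
        xhat p \<xi> i j * xhat p \<xi> j k * pdiff 0 1 g (\<theta> i s, \<theta> j s) * \<Gamma> (\<theta> j s, \<theta> k s)))"

end

theory Submission
  imports Defs "HOL-Library.Periodic_Fun"
begin

(*
  At each time s the integrands of C^n_t(g) are n^-3 times sums
  sum_ijk xhat_ij xhat_ik F(theta_i, theta_j) G(theta_i, theta_k) (or the ij,jk analogue),
  with F = d1 g resp. d2 g and G = Gamma. A periodic kernel F with continuous
  derivatives d1 F, d2 F, d1 d2 F can be written, on [0, 2pi]^2, as F(x0, y0) plus integrals
  of these derivatives against step functions of x and of y bounded by 1. Consequently
  |sum_ij c_ij F(x_i, y_j)| <= K_F * sup {|sum_ij c_ij u_i v_j| : |u_i|, |v_j| <= 1}, where K_F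
  depends only on the L^2 norms of F and those three derivatives, once the base point
  (x0, y0) is chosen where the relevant slices have at most average L^1 norm. Applying this
  to F and then to G leaves the trilinear form of xhat_ij xhat_ik on the unit cube, which is
  maximised at sign vectors and is therefore at most n^3 S_n. For g in the unit ball of
  H^3 the constants of d1 g and d2 g are uniform, as they involve derivatives of order <= 3.
*)

section \<open>Trilinear forms and sign vectors\<close>

definition trilinear :: "nat \<Rightarrow> (nat \<Rightarrow> nat \<Rightarrow> nat \<Rightarrow> real)
    \<Rightarrow> (nat \<Rightarrow> real) \<Rightarrow> (nat \<Rightarrow> real) \<Rightarrow> (nat \<Rightarrow> real) \<Rightarrow> real" where
  "trilinear n A u v w = (\<Sum>i<n. \<Sum>j<n. \<Sum>k<n. A i j k * u i * v j * w k)"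

definition sign_sup :: "nat \<Rightarrow> (nat \<Rightarrow> nat \<Rightarrow> nat \<Rightarrow> real) \<Rightarrow> real" where
  "sign_sup n A = Sup ((\<lambda>(r, s, t). \<bar>1 / real n ^ 3 * trilinear n A r s t\<bar>)
      ` (signs n \<times> signs n \<times> signs n))"

lemma S_ijik_eq_sign_sup: "S_ijik n p \<xi> = sign_sup n (\<lambda>i j k. xhat p \<xi> i j * xhat p \<xi> i k)"
  unfolding S_ijik_def sign_sup_def trilinear_def by simp

lemma S_ijjk_eq_sign_sup: "S_ijjk n p \<xi> = sign_sup n (\<lambda>i j k. xhat p \<xi> i j * xhat p \<xi> j k)"
  unfolding S_ijjk_def sign_sup_def trilinear_def by simp

lemma finite_signs: "finite (signs n)"
  unfolding signs_def by (simp add: finite_PiE)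

lemma exists_signs: "\<exists>r. r \<in> signs n"
  unfolding signs_def by (metis PiE_eq_empty_iff insert_iff ex_in_conv)

lemma abs_sum_le_abs_sum_signs:
  fixes c u :: "nat \<Rightarrow> real"
  assumes "\<forall>i<n. \<bar>u i\<bar> \<le> 1"
  obtains r where "r \<in> signs n" "\<bar>\<Sum>i<n. u i * c i\<bar> \<le> \<bar>\<Sum>i<n. r i * c i\<bar>"
proof
  define r :: "nat \<Rightarrow> real" where "r i = (if i < n then (if c i \<ge> 0 then 1 else -1) else undefined)" for i
  show "r \<in> signs n"
    unfolding signs_def r_def by (auto simp: PiE_def extensional_def)
  have "\<bar>\<Sum>i<n. u i * c i\<bar> \<le> (\<Sum>i<n. \<bar>c i\<bar>)"
    using assms by (intro order.trans[OF sum_abs] sum_mono)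
      (auto simp: abs_mult mult_left_le_one_le)
  also have "\<dots> = (\<Sum>i<n. r i * c i)"
    by (rule sum.cong) (auto simp: r_def)
  finally show "\<bar>\<Sum>i<n. u i * c i\<bar> \<le> \<bar>\<Sum>i<n. r i * c i\<bar>" by linarith
qed

lemma sign_sup_upper:
  assumes "r \<in> signs n" "s \<in> signs n" "t \<in> signs n"
  shows "\<bar>1 / real n ^ 3 * trilinear n A r s t\<bar> \<le> sign_sup n A"
  unfolding sign_sup_def
  by (rule cSup_upper) (use assms finite_signs in \<open>auto intro!: image_eqI[where x="(r, s, t)"]\<close>)

lemma sign_sup_nonneg: "sign_sup n A \<ge> 0"
  using exists_signs[of n] sign_sup_upper by (meson abs_ge_zero order.trans)

lemma trilinear_swap_u: "trilinear n A u v w = (\<Sum>i<n. u i * (\<Sum>j<n. \<Sum>k<n. A i j k * v j * w k))"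
  unfolding trilinear_def by (simp add: sum_distrib_left mult_ac)

lemma trilinear_swap_v: "trilinear n A u v w = (\<Sum>j<n. v j * (\<Sum>i<n. \<Sum>k<n. A i j k * u i * w k))"
  unfolding trilinear_def by (subst sum.swap) (simp add: sum_distrib_left mult_ac)

lemma trilinear_swap_w: "trilinear n A u v w = (\<Sum>k<n. w k * (\<Sum>i<n. \<Sum>j<n. A i j k * u i * v j))"
proof -
  have "trilinear n A u v w = (\<Sum>i<n. \<Sum>k<n. \<Sum>j<n. A i j k * u i * v j * w k)"
    unfolding trilinear_def by (intro sum.cong refl sum.swap)
  also have "\<dots> = (\<Sum>k<n. \<Sum>i<n. \<Sum>j<n. A i j k * u i * v j * w k)"
    by (rule sum.swap)
  finally show ?thesis by (simp add: sum_distrib_left mult_ac)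
qed

lemma abs_trilinear_le_sign_sup:
  assumes "\<forall>i<n. \<bar>u i\<bar> \<le> 1" "\<forall>j<n. \<bar>v j\<bar> \<le> 1" "\<forall>k<n. \<bar>w k\<bar> \<le> 1"
  shows "\<bar>trilinear n A u v w\<bar> \<le> real n ^ 3 * sign_sup n A"
proof -
  obtain r where r: "r \<in> signs n" "\<bar>trilinear n A u v w\<bar> \<le> \<bar>trilinear n A r v w\<bar>"
    using abs_sum_le_abs_sum_signs[OF assms(1)] unfolding trilinear_swap_u[of n A _ v w] .
  obtain s where s: "s \<in> signs n" "\<bar>trilinear n A r v w\<bar> \<le> \<bar>trilinear n A r s w\<bar>"
    using abs_sum_le_abs_sum_signs[OF assms(2)] unfolding trilinear_swap_v[of n A r _ w] .
  obtain t where t: "t \<in> signs n" "\<bar>trilinear n A r s w\<bar> \<le> \<bar>trilinear n A r s t\<bar>"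
    using abs_sum_le_abs_sum_signs[OF assms(3)] unfolding trilinear_swap_w[of n A r s] .
  have "\<bar>trilinear n A r s t\<bar> \<le> real n ^ 3 * sign_sup n A"
  proof (cases "n = 0")
    case True
    then show ?thesis by (simp add: trilinear_def)
  next
    case False
    then have "real n ^ 3 > 0" by simp
    with sign_sup_upper[OF r(1) s(1) t(1), of A] show ?thesis
      by (simp add: abs_mult divide_le_eq mult.commute)
  qed
  with r s t show ?thesis by linarith
qed

section \<open>Kernels acting on bounded bilinear forms\<close>

definition bilinear_bounded :: "nat \<Rightarrow> (nat \<Rightarrow> nat \<Rightarrow> real) \<Rightarrow> real \<Rightarrow> bool" where
  "bilinear_bounded n c B \<longleftrightarrow> (\<forall>u v. (\<forall>i<n. \<bar>u i\<bar> \<le> 1) \<longrightarrow> (\<forall>j<n. \<bar>v j\<bar> \<le> 1) \<longrightarrow>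
     \<bar>\<Sum>i<n. \<Sum>j<n. c i j * u i * v j\<bar> \<le> B)"

definition kernel_bound :: "(real \<times> real \<Rightarrow> real) \<Rightarrow> real \<Rightarrow> bool" where
  "kernel_bound F K \<longleftrightarrow> (\<forall>n c x y B. bilinear_bounded n c B \<longrightarrow>
     \<bar>\<Sum>i<n. \<Sum>j<n. c i j * F (x i, y j)\<bar> \<le> K * B)"

lemma bilinear_boundedD:
  "bilinear_bounded n c B \<Longrightarrow> \<forall>i<n. \<bar>u i\<bar> \<le> 1 \<Longrightarrow> \<forall>j<n. \<bar>v j\<bar> \<le> 1 \<Longrightarrow>
    \<bar>\<Sum>i<n. \<Sum>j<n. c i j * u i * v j\<bar> \<le> B"
  unfolding bilinear_bounded_def by blast

lemma bilinear_bounded_nonneg: "bilinear_bounded n c B \<Longrightarrow> 0 \<le> B"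
  using bilinear_boundedD[of n c B "\<lambda>_. 0" "\<lambda>_. 0"] by simp

lemma kernel_boundD:
  "kernel_bound F K \<Longrightarrow> bilinear_bounded n c B \<Longrightarrow> \<bar>\<Sum>i<n. \<Sum>j<n. c i j * F (x i, y j)\<bar> \<le> K * B"
  unfolding kernel_bound_def by blast

lemma kernel_bound_mono:
  assumes "kernel_bound F K" "K \<le> K'"
  shows "kernel_bound F K'"
  unfolding kernel_bound_def
proof (intro allI impI)
  fix n c x y B
  assume B: "bilinear_bounded n c B"
  have "\<bar>\<Sum>i<n. \<Sum>j<n. c i j * F (x i, y j)\<bar> \<le> K * B" by (rule kernel_boundD[OF assms(1) B])
  also have "\<dots> \<le> K' * B" using assms(2) bilinear_bounded_nonneg[OF B] by (rule mult_right_mono)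
  finally show "\<bar>\<Sum>i<n. \<Sum>j<n. c i j * F (x i, y j)\<bar> \<le> K' * B" .
qed

lemma bilinear_bounded_contract_first:
  assumes "kernel_bound G K"
  shows "bilinear_bounded n (\<lambda>i j. \<Sum>k<n. A i j k * G (x i, z k)) (K * (real n ^ 3 * sign_sup n A))"
  unfolding bilinear_bounded_def
proof (intro allI impI)
  fix u v :: "nat \<Rightarrow> real"
  assume u: "\<forall>i<n. \<bar>u i\<bar> \<le> 1" and v: "\<forall>j<n. \<bar>v j\<bar> \<le> 1"
  define c where "c i k = (\<Sum>j<n. A i j k * u i * v j)" for i k
  have "(\<Sum>i<n. \<Sum>j<n. (\<Sum>k<n. A i j k * G (x i, z k)) * u i * v j)
      = (\<Sum>i<n. \<Sum>j<n. \<Sum>k<n. A i j k * u i * v j * G (x i, z k))"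
    by (simp add: sum_distrib_left sum_distrib_right mult_ac)
  also have "\<dots> = (\<Sum>i<n. \<Sum>k<n. c i k * G (x i, z k))"
    unfolding c_def sum_distrib_right by (intro sum.cong refl sum.swap)
  finally have eq: "(\<Sum>i<n. \<Sum>j<n. (\<Sum>k<n. A i j k * G (x i, z k)) * u i * v j)
      = (\<Sum>i<n. \<Sum>k<n. c i k * G (x i, z k))" .
  have "bilinear_bounded n c (real n ^ 3 * sign_sup n A)"
    unfolding bilinear_bounded_def
  proof (intro allI impI)
    fix u' w :: "nat \<Rightarrow> real"
    assume u': "\<forall>i<n. \<bar>u' i\<bar> \<le> 1" and w: "\<forall>k<n. \<bar>w k\<bar> \<le> 1"
    have "(\<Sum>i<n. \<Sum>k<n. c i k * u' i * w k) = trilinear n A (\<lambda>i. u i * u' i) v w"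
    proof -
      have "(\<Sum>i<n. \<Sum>k<n. c i k * u' i * w k) = (\<Sum>i<n. \<Sum>k<n. \<Sum>j<n. A i j k * (u i * u' i) * v j * w k)"
        unfolding c_def sum_distrib_right by (simp add: mult_ac)
      also have "\<dots> = trilinear n A (\<lambda>i. u i * u' i) v w"
        unfolding trilinear_def by (intro sum.cong refl sum.swap)
      finally show ?thesis .
    qed
    moreover have "\<forall>i<n. \<bar>u i * u' i\<bar> \<le> 1"
      using u u' by (simp add: abs_mult mult_le_one)
    ultimately show "\<bar>\<Sum>i<n. \<Sum>k<n. c i k * u' i * w k\<bar> \<le> real n ^ 3 * sign_sup n A"
      using abs_trilinear_le_sign_sup v w by simp
  qed
  then show "\<bar>\<Sum>i<n. \<Sum>j<n. (\<Sum>k<n. A i j k * G (x i, z k)) * u i * v j\<bar>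
      \<le> K * (real n ^ 3 * sign_sup n A)"
    unfolding eq by (rule kernel_boundD[OF assms])
qed

lemma bilinear_bounded_contract_second:
  assumes "kernel_bound G K"
  shows "bilinear_bounded n (\<lambda>i j. \<Sum>k<n. A i j k * G (x j, z k)) (K * (real n ^ 3 * sign_sup n A))"
  unfolding bilinear_bounded_def
proof (intro allI impI)
  fix u v :: "nat \<Rightarrow> real"
  assume u: "\<forall>i<n. \<bar>u i\<bar> \<le> 1" and v: "\<forall>j<n. \<bar>v j\<bar> \<le> 1"
  define c where "c j k = (\<Sum>i<n. A i j k * u i * v j)" for j k
  have "(\<Sum>i<n. \<Sum>j<n. (\<Sum>k<n. A i j k * G (x j, z k)) * u i * v j)
      = (\<Sum>i<n. \<Sum>j<n. \<Sum>k<n. A i j k * u i * v j * G (x j, z k))"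
    by (simp add: sum_distrib_left sum_distrib_right mult_ac)
  also have "\<dots> = (\<Sum>j<n. \<Sum>i<n. \<Sum>k<n. A i j k * u i * v j * G (x j, z k))"
    by (rule sum.swap)
  also have "\<dots> = (\<Sum>j<n. \<Sum>k<n. c j k * G (x j, z k))"
    unfolding c_def sum_distrib_right by (intro sum.cong refl sum.swap)
  finally have eq: "(\<Sum>i<n. \<Sum>j<n. (\<Sum>k<n. A i j k * G (x j, z k)) * u i * v j)
      = (\<Sum>j<n. \<Sum>k<n. c j k * G (x j, z k))" .
  have "bilinear_bounded n c (real n ^ 3 * sign_sup n A)"
    unfolding bilinear_bounded_def
  proof (intro allI impI)
    fix v' w :: "nat \<Rightarrow> real"
    assume v': "\<forall>j<n. \<bar>v' j\<bar> \<le> 1" and w: "\<forall>k<n. \<bar>w k\<bar> \<le> 1"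
    have "(\<Sum>j<n. \<Sum>k<n. c j k * v' j * w k) = trilinear n A u (\<lambda>j. v j * v' j) w"
    proof -
      have "(\<Sum>j<n. \<Sum>k<n. c j k * v' j * w k) = (\<Sum>j<n. \<Sum>k<n. \<Sum>i<n. A i j k * u i * (v j * v' j) * w k)"
        unfolding c_def sum_distrib_right by (simp add: mult_ac)
      also have "\<dots> = (\<Sum>j<n. \<Sum>i<n. \<Sum>k<n. A i j k * u i * (v j * v' j) * w k)"
        by (intro sum.cong refl sum.swap)
      also have "\<dots> = trilinear n A u (\<lambda>j. v j * v' j) w"
        unfolding trilinear_def by (rule sum.swap)
      finally show ?thesis .
    qed
    moreover have "\<forall>j<n. \<bar>v j * v' j\<bar> \<le> 1"
      using v v' by (simp add: abs_mult mult_le_one)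
    ultimately show "\<bar>\<Sum>j<n. \<Sum>k<n. c j k * v' j * w k\<bar> \<le> real n ^ 3 * sign_sup n A"
      using abs_trilinear_le_sign_sup u w by simp
  qed
  then show "\<bar>\<Sum>i<n. \<Sum>j<n. (\<Sum>k<n. A i j k * G (x j, z k)) * u i * v j\<bar>
      \<le> K * (real n ^ 3 * sign_sup n A)"
    unfolding eq by (rule kernel_boundD[OF assms])
qed

lemma abs_triple_sum_ij_ik_le:
  assumes "kernel_bound F K1" "kernel_bound G K2"
  shows "\<bar>\<Sum>i<n. \<Sum>j<n. \<Sum>k<n. A i j k * F (x i, x j) * G (x i, x k)\<bar>
    \<le> K1 * (K2 * (real n ^ 3 * sign_sup n A))"
proof -
  have "(\<Sum>i<n. \<Sum>j<n. \<Sum>k<n. A i j k * F (x i, x j) * G (x i, x k))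
      = (\<Sum>i<n. \<Sum>j<n. (\<Sum>k<n. A i j k * G (x i, x k)) * F (x i, x j))"
    by (simp add: sum_distrib_left sum_distrib_right mult_ac)
  then show ?thesis
    using kernel_boundD[OF assms(1) bilinear_bounded_contract_first[OF assms(2)]] by simp
qed

lemma abs_triple_sum_ij_jk_le:
  assumes "kernel_bound F K1" "kernel_bound G K2"
  shows "\<bar>\<Sum>i<n. \<Sum>j<n. \<Sum>k<n. A i j k * F (x i, x j) * G (x j, x k)\<bar>
    \<le> K1 * (K2 * (real n ^ 3 * sign_sup n A))"
proof -
  have "(\<Sum>i<n. \<Sum>j<n. \<Sum>k<n. A i j k * F (x i, x j) * G (x j, x k))
      = (\<Sum>i<n. \<Sum>j<n. (\<Sum>k<n. A i j k * G (x j, x k)) * F (x i, x j))"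
    by (simp add: sum_distrib_left sum_distrib_right mult_ac)
  then show ?thesis
    using kernel_boundD[OF assms(1) bilinear_bounded_contract_second[OF assms(2)]] by simp
qed

lemma abs_bilinear_le:
  assumes "bilinear_bounded n c B" "\<forall>i<n. \<bar>a i\<bar> \<le> 1" "\<forall>j<n. \<bar>b j\<bar> \<le> 1"
  shows "\<bar>\<Sum>i<n. \<Sum>j<n. c i j * (a i * b j * \<phi>)\<bar> \<le> B * \<bar>\<phi>\<bar>"
proof -
  let ?Q = "\<Sum>i<n. \<Sum>j<n. c i j * a i * b j"
  have "(\<Sum>i<n. \<Sum>j<n. c i j * (a i * b j * \<phi>)) = \<phi> * ?Q"
    by (simp add: sum_distrib_left mult_ac)
  also have "\<bar>\<phi> * ?Q\<bar> = \<bar>\<phi>\<bar> * \<bar>?Q\<bar>"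
    by (rule abs_mult)
  also have "\<dots> \<le> \<bar>\<phi>\<bar> * B"
    using bilinear_boundedD[OF assms] by (intro mult_left_mono) auto
  finally show ?thesis by (simp add: mult.commute)
qed

lemma abs_sum_integral_le:
  fixes f :: "nat \<Rightarrow> nat \<Rightarrow> real \<Rightarrow> real"
  assumes f: "\<And>i j. i < n \<Longrightarrow> j < n \<Longrightarrow> f i j integrable_on S" and w: "w integrable_on S"
    and bound: "\<And>s. s \<in> S \<Longrightarrow> \<bar>\<Sum>i<n. \<Sum>j<n. c i j * f i j s\<bar> \<le> B * w s"
  shows "\<bar>\<Sum>i<n. \<Sum>j<n. c i j * integral S (f i j)\<bar> \<le> B * integral S w"
proof -
  have row: "(\<lambda>s. \<Sum>j<n. c i j * f i j s) integrable_on S" if "i < n" for i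
    using f that by (intro integrable_sum integrable_on_mult_right) auto
  have "(\<Sum>i<n. \<Sum>j<n. c i j * integral S (f i j))
      = (\<Sum>i<n. integral S (\<lambda>s. \<Sum>j<n. c i j * f i j s))"
    using f by (intro sum.cong refl) (subst integral_sum, auto intro: integrable_on_mult_right)
  also have "\<dots> = integral S (\<lambda>s. \<Sum>i<n. \<Sum>j<n. c i j * f i j s)"
    using row by (subst integral_sum) auto
  finally have eq: "(\<Sum>i<n. \<Sum>j<n. c i j * integral S (f i j))
      = integral S (\<lambda>s. \<Sum>i<n. \<Sum>j<n. c i j * f i j s)" .
  have "norm (integral S (\<lambda>s. \<Sum>i<n. \<Sum>j<n. c i j * f i j s)) \<le> integral S (\<lambda>s. B * w s)"
    using f w bound
    by (intro Henstock_Kurzweil_Integration.integral_norm_bound_integral integrable_sum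
        integrable_on_mult_right) auto
  then show ?thesis by (simp add: eq)
qed

section \<open>Step-function representation of periodic kernels\<close>

lemma periodic_representative:
  fixes h :: "real \<Rightarrow> 'a"
  assumes c: "c > 0" and periodic: "\<And>x. h (x + c) = h x"
  obtains x' where "x' \<in> {0..c}" "h x' = h x"
proof
  interpret periodic_fun_simple h c
    by standard (rule periodic)
  show "h (x - of_int \<lfloor>x / c\<rfloor> * c) = h x"
    by (rule minus_of_int)
  have "x - of_int \<lfloor>x / c\<rfloor> * c = c * frac (x / c)"
    using c by (simp add: frac_def algebra_simps)
  then show "x - of_int \<lfloor>x / c\<rfloor> * c \<in> {0..c}"
    using c frac_ge_0[of "x / c"] frac_lt_1[of "x / c"] by simp
qed

lemma has_integral_derivative_times_step:
  fixes f f' :: "real \<Rightarrow> real"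
  assumes f': "\<And>s. (f has_real_derivative f' s) (at s)"
    and a: "a \<in> {l..h}" and b: "b \<in> {l..h}"
  shows "((\<lambda>s. (indicator {..b} s - indicator {..a} s) * f' s) has_integral (f b - f a)) {l..h}"
proof -
  have ftc: "((\<lambda>s. indicator {..x} s * f' s) has_integral (f x - f l)) {l..h}"
    if "x \<in> {l..h}" for x
  proof -
    have "(f' has_integral (f x - f l)) {l..x}"
      using that f' by (intro fundamental_theorem_of_calculus)
        (auto simp: has_real_derivative_iff_has_vector_derivative has_vector_derivative_at_within)
    moreover have "{..x} \<inter> {l..h} = {l..x}"
      using that by auto
    moreover have "(\<lambda>s. indicator {..x} s * f' s) = (\<lambda>s. if s \<in> {..x} then f' s else 0)"
      by (auto simp: indicator_def)
    ultimately show ?thesis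
      by (simp only: has_integral_restrict_Int)
  qed
  from has_integral_diff[OF ftc[OF b] ftc[OF a]] show ?thesis
    by (simp add: algebra_simps)
qed

lemma exists_le_average:
  fixes f :: "real \<Rightarrow> real"
  assumes "f integrable_on {a..b}" "a < b" "e > 0"
  shows "\<exists>x\<in>{a..b}. f x \<le> integral {a..b} f / (b - a) + e"
proof (rule ccontr)
  assume "\<not> ?thesis"
  then have "integral {a..b} (\<lambda>x. integral {a..b} f / (b - a) + e) \<le> integral {a..b} f"
    using assms by (intro integral_le) force+
  moreover have "integral {a..b} (\<lambda>x. integral {a..b} f / (b - a) + e)
      = integral {a..b} f + (b - a) * e"
    using assms by (simp add: field_simps)
  moreover have "(b - a) * e > 0"
    using assms by simp
  ultimately show False
    by linarith
qed

definition sq_integral_T2 :: "(real \<times> real \<Rightarrow> real) \<Rightarrow> real" where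
  "sq_integral_T2 h = integral (cbox (0, 0) (2*pi, 2*pi)) (\<lambda>z. (h z)\<^sup>2)"

lemma sq_integral_T2_nonneg: "sq_integral_T2 h \<ge> 0"
  unfolding sq_integral_T2_def
  by (cases "(\<lambda>z. (h z)\<^sup>2) integrable_on cbox (0, 0) (2*pi, 2*pi)")
    (simp_all add: integral_nonneg not_integrable_integral)

lemma sq_integral_T2_swap:
  assumes "continuous_on UNIV h"
  shows "sq_integral_T2 (\<lambda>(y, x). h (x, y)) = sq_integral_T2 h"
proof -
  have "continuous_on (cbox (0, 0) (2*pi, 2*pi)) (\<lambda>(x, y). (h (y, x))\<^sup>2)"
    unfolding case_prod_unfold
    by (intro continuous_intros continuous_on_compose2[OF assms]) auto
  from integral_swap_2dim[where f = "\<lambda>x y. (h (y, x))\<^sup>2", OF this] show ?thesis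
    unfolding sq_integral_T2_def by (simp add: case_prod_unfold)
qed

lemma integral_abs_slices_le:
  fixes h :: "real \<times> real \<Rightarrow> real"
  assumes h: "continuous_on UNIV h"
  shows "(\<lambda>x. integral {0..2*pi} (\<lambda>y. \<bar>h (x, y)\<bar>)) integrable_on {0..2*pi}"
    and "integral {0..2*pi} (\<lambda>x. integral {0..2*pi} (\<lambda>y. \<bar>h (x, y)\<bar>))
      \<le> (sq_integral_T2 h + (2*pi)\<^sup>2) / 2"
proof -
  let ?Q = "cbox (0, 0) (2*pi, 2*pi) :: (real \<times> real) set"
  have abs_h: "continuous_on ?Q (\<lambda>z. \<bar>h z\<bar>)"
    by (intro continuous_intros continuous_on_subset[OF h]) auto
  show "(\<lambda>x. integral {0..2*pi} (\<lambda>y. \<bar>h (x, y)\<bar>)) integrable_on {0..2*pi}"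
    using integral_integrable_2dim[OF abs_h] by (simp add: cbox_interval)
  have "integral {0..2*pi} (\<lambda>x. integral {0..2*pi} (\<lambda>y. \<bar>h (x, y)\<bar>)) = integral ?Q (\<lambda>z. \<bar>h z\<bar>)"
    using integral_prod_continuous[OF abs_h] by (simp add: cbox_interval)
  also have "\<dots> \<le> integral ?Q (\<lambda>z. ((h z)\<^sup>2 + 1) / 2)"
  proof (rule integral_le)
    show "(\<lambda>z. \<bar>h z\<bar>) integrable_on ?Q"
      by (rule integrable_continuous[OF abs_h])
    show "(\<lambda>z. ((h z)\<^sup>2 + 1) / 2) integrable_on ?Q"
      by (intro integrable_continuous continuous_intros continuous_on_subset[OF h]) auto
    show "\<bar>h z\<bar> \<le> ((h z)\<^sup>2 + 1) / 2" for z
      using zero_le_power2[of "\<bar>h z\<bar> - 1"] by (simp add: power2_eq_square algebra_simps)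
  qed
  also have "\<dots> = (sq_integral_T2 h + (2*pi)\<^sup>2) / 2"
  proof -
    have "(\<lambda>z. (h z)\<^sup>2) integrable_on ?Q"
      by (intro integrable_continuous continuous_intros continuous_on_subset[OF h]) auto
    from integral_add[OF this integrable_const[of 1]]
    have "integral ?Q (\<lambda>z. (h z)\<^sup>2 + 1) = sq_integral_T2 h + (2*pi)\<^sup>2"
      unfolding sq_integral_T2_def by (simp add: content_Pair power2_eq_square)
    then show ?thesis
      by simp
  qed
  finally show "integral {0..2*pi} (\<lambda>x. integral {0..2*pi} (\<lambda>y. \<bar>h (x, y)\<bar>))
      \<le> (sq_integral_T2 h + (2*pi)\<^sup>2) / 2" .
qed

lemma integral_abs_slices_le':
  fixes h :: "real \<times> real \<Rightarrow> real"
  assumes h: "continuous_on UNIV h"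
  shows "(\<lambda>y. integral {0..2*pi} (\<lambda>x. \<bar>h (x, y)\<bar>)) integrable_on {0..2*pi}"
    and "integral {0..2*pi} (\<lambda>y. integral {0..2*pi} (\<lambda>x. \<bar>h (x, y)\<bar>))
      \<le> (sq_integral_T2 h + (2*pi)\<^sup>2) / 2"
proof -
  have "continuous_on UNIV (\<lambda>(y, x). h (x, y))"
    unfolding case_prod_unfold by (intro continuous_on_compose2[OF h] continuous_intros) auto
  from integral_abs_slices_le[OF this] sq_integral_T2_swap[OF h] show
    "(\<lambda>y. integral {0..2*pi} (\<lambda>x. \<bar>h (x, y)\<bar>)) integrable_on {0..2*pi}"
    "integral {0..2*pi} (\<lambda>y. integral {0..2*pi} (\<lambda>x. \<bar>h (x, y)\<bar>))
      \<le> (sq_integral_T2 h + (2*pi)\<^sup>2) / 2"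
    by simp_all
qed

lemma integrable_abs_slices:
  fixes h :: "real \<times> real \<Rightarrow> real"
  assumes "continuous_on UNIV h"
  shows "(\<lambda>s. \<bar>h (s, y)\<bar>) integrable_on {a..b}" and "(\<lambda>u. \<bar>h (x, u)\<bar>) integrable_on {a..b}"
  by (intro integrable_continuous_interval continuous_intros continuous_on_compose2[OF assms]; auto)+

lemma exists_base_point:
  fixes F F1 F2 :: "real \<times> real \<Rightarrow> real"
  assumes F: "continuous_on UNIV F" and F1: "continuous_on UNIV F1" and F2: "continuous_on UNIV F2"
  obtains x0 y0 where "x0 \<in> {0..2*pi}" "y0 \<in> {0..2*pi}"
    "\<bar>F (x0, y0)\<bar> + integral {0..2*pi} (\<lambda>s. \<bar>F1 (s, y0)\<bar>) + integral {0..2*pi} (\<lambda>u. \<bar>F2 (x0, u)\<bar>)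
      \<le> (sq_integral_T2 F + sq_integral_T2 F1 + sq_integral_T2 F2 + 3 * (2*pi)\<^sup>2) / 2 + 2"
proof -
  define JF where "JF x = integral {0..2*pi} (\<lambda>u. \<bar>F (x, u)\<bar>)" for x
  define JF1 where "JF1 y = integral {0..2*pi} (\<lambda>s. \<bar>F1 (s, y)\<bar>)" for y
  define JF2 where "JF2 x = integral {0..2*pi} (\<lambda>u. \<bar>F2 (x, u)\<bar>)" for x
  note JF = integral_abs_slices_le[OF F, folded JF_def]
  note JF1 = integral_abs_slices_le'[OF F1, folded JF1_def]
  note JF2 = integral_abs_slices_le[OF F2, folded JF2_def]
  have JF_nonneg: "JF x \<ge> 0" "JF1 x \<ge> 0" "JF2 x \<ge> 0" for x
    unfolding JF_def JF1_def JF2_def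
    by (intro integral_nonneg integrable_abs_slices F F1 F2; simp)+
  have avg_le: "a / (2*pi) \<le> a" if "a \<ge> 0" for a :: real
    using that pi_gt3 by (simp add: divide_le_eq mult_le_cancel_left1)
  obtain x0 where x0: "x0 \<in> {0..2*pi}"
    and "JF2 x0 + JF x0 \<le> integral {0..2*pi} (\<lambda>x. JF2 x + JF x) / (2*pi - 0) + 1"
    using exists_le_average[where e=1, OF integrable_add[OF JF2(1) JF(1)]] by auto
  then have x0_le: "JF2 x0 + JF x0 \<le> integral {0..2*pi} JF2 + integral {0..2*pi} JF + 1"
    using avg_le[of "integral {0..2*pi} JF2 + integral {0..2*pi} JF"] JF_nonneg JF(1) JF2(1)
    by (simp add: integral_add integral_nonneg)
  have JF_x0: "(\<lambda>y. \<bar>F (x0, y)\<bar>) integrable_on {0..2*pi}"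
    by (rule integrable_abs_slices[OF F])
  obtain y0 where y0: "y0 \<in> {0..2*pi}"
    and "JF1 y0 + \<bar>F (x0, y0)\<bar> \<le> integral {0..2*pi} (\<lambda>y. JF1 y + \<bar>F (x0, y)\<bar>) / (2*pi - 0) + 1"
    using exists_le_average[where e=1, OF integrable_add[OF JF1(1) JF_x0]] by auto
  then have y0_le: "JF1 y0 + \<bar>F (x0, y0)\<bar> \<le> integral {0..2*pi} JF1 + JF x0 + 1"
    using avg_le[of "integral {0..2*pi} JF1 + JF x0"] JF_nonneg JF1(1) JF_x0
    by (simp add: integral_add integral_nonneg JF_def)
  show ?thesis
  proof (rule that[OF x0 y0])
    show "\<bar>F (x0, y0)\<bar> + integral {0..2*pi} (\<lambda>s. \<bar>F1 (s, y0)\<bar>) + integral {0..2*pi} (\<lambda>u. \<bar>F2 (x0, u)\<bar>)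
      \<le> (sq_integral_T2 F + sq_integral_T2 F1 + sq_integral_T2 F2 + 3 * (2*pi)\<^sup>2) / 2 + 2"
      using x0_le y0_le JF(2) JF1(2) JF2(2) unfolding JF1_def[symmetric] JF2_def[symmetric]
      by argo
  qed
qed

lemma abs_indicator_diff_le: "\<bar>indicator A s - indicator B s :: real\<bar> \<le> 1"
  by (simp add: indicator_def)

lemma abs_sum_integral_bilinear_le:
  fixes a b :: "nat \<Rightarrow> real \<Rightarrow> real"
  assumes c: "bilinear_bounded n c B" and a: "\<And>i s. \<bar>a i s\<bar> \<le> 1" and b: "\<And>j s. \<bar>b j s\<bar> \<le> 1"
    and int: "\<And>i j. (\<lambda>s. a i s * b j s * \<phi> s) integrable_on S" "(\<lambda>s. \<bar>\<phi> s\<bar>) integrable_on S"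
  shows "\<bar>\<Sum>i<n. \<Sum>j<n. c i j * integral S (\<lambda>s. a i s * b j s * \<phi> s)\<bar> \<le> B * integral S (\<lambda>s. \<bar>\<phi> s\<bar>)"
  using int abs_bilinear_le[OF c] a b by (intro abs_sum_integral_le) auto

lemma abs_sum_mixed_integral_le:
  fixes F2 F12 :: "real \<times> real \<Rightarrow> real" and a b :: "nat \<Rightarrow> real \<Rightarrow> real"
  assumes c: "bilinear_bounded n c B" and F12: "continuous_on UNIV F12"
    and a: "\<And>i s. \<bar>a i s\<bar> \<le> 1" and b: "\<And>j u. \<bar>b j u\<bar> \<le> 1"
    and inner: "\<And>i u. ((\<lambda>s. a i s * F12 (s, u)) has_integral F2 (x i, u) - F2 (x0, u)) {0..2*pi}"
    and outer: "\<And>i j. (\<lambda>u. b j u * (F2 (x i, u) - F2 (x0, u))) integrable_on {0..2*pi}"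
  shows "\<bar>\<Sum>i<n. \<Sum>j<n. c i j * integral {0..2*pi} (\<lambda>u. b j u * (F2 (x i, u) - F2 (x0, u)))\<bar>
    \<le> B * integral {0..2*pi} (\<lambda>u. integral {0..2*pi} (\<lambda>s. \<bar>F12 (s, u)\<bar>))"
proof (rule abs_sum_integral_le)
  fix u
  have "(\<Sum>i<n. \<Sum>j<n. c i j * (b j u * (F2 (x i, u) - F2 (x0, u))))
      = (\<Sum>i<n. \<Sum>j<n. c i j * integral {0..2*pi} (\<lambda>s. a i s * b j u * F12 (s, u)))"
    using integral_unique[OF has_integral_mult_right[OF inner, of "b _ u"]] by (simp add: mult_ac)
  also have "\<bar>\<dots>\<bar> \<le> B * integral {0..2*pi} (\<lambda>s. \<bar>F12 (s, u)\<bar>)"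
    using has_integral_mult_right[OF inner, of "b _ u"] integrable_abs_slices[OF F12]
    by (intro abs_sum_integral_bilinear_le[OF c a b]) (auto simp: mult_ac)
  finally show "\<bar>\<Sum>i<n. \<Sum>j<n. c i j * (b j u * (F2 (x i, u) - F2 (x0, u)))\<bar>
      \<le> B * integral {0..2*pi} (\<lambda>s. \<bar>F12 (s, u)\<bar>)" .
qed (use outer integral_abs_slices_le'[OF F12] in blast)+

lemma abs_bilinear_sum_le_on_square:
  fixes F F1 F2 F12 :: "real \<times> real \<Rightarrow> real"
  assumes cont: "continuous_on UNIV F" "continuous_on UNIV F1" "continuous_on UNIV F2" "continuous_on UNIV F12"
    and F1: "\<And>x y. ((\<lambda>s. F (s, y)) has_real_derivative F1 (x, y)) (at x)"
    and F2: "\<And>x y. ((\<lambda>u. F (x, u)) has_real_derivative F2 (x, y)) (at y)"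
    and F12: "\<And>x y. ((\<lambda>s. F2 (s, y)) has_real_derivative F12 (x, y)) (at x)"
    and c: "bilinear_bounded n c B" and x: "\<And>i. x i \<in> {0..2*pi}" and y: "\<And>j. y j \<in> {0..2*pi}"
  shows "\<bar>\<Sum>i<n. \<Sum>j<n. c i j * F (x i, y j)\<bar>
    \<le> B * ((sq_integral_T2 F + sq_integral_T2 F1 + sq_integral_T2 F2 + sq_integral_T2 F12) / 2
      + 2 * (2*pi)\<^sup>2 + 2)"
proof -
  let ?I = "{0..2*pi}"
  obtain x0 y0 where x0: "x0 \<in> ?I" and y0: "y0 \<in> ?I" and base:
    "\<bar>F (x0, y0)\<bar> + integral ?I (\<lambda>s. \<bar>F1 (s, y0)\<bar>) + integral ?I (\<lambda>u. \<bar>F2 (x0, u)\<bar>)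
      \<le> (sq_integral_T2 F + sq_integral_T2 F1 + sq_integral_T2 F2 + 3 * (2*pi)\<^sup>2) / 2 + 2"
    using exists_base_point[OF cont(1-3)] by blast
  define kx :: "nat \<Rightarrow> real \<Rightarrow> real" where "kx i s = indicator {..x i} s - indicator {..x0} s" for i s
  define ky :: "nat \<Rightarrow> real \<Rightarrow> real" where "ky j u = indicator {..y j} u - indicator {..y0} u" for j u
  have kx_le: "\<bar>kx i s\<bar> \<le> 1" and ky_le: "\<bar>ky j u\<bar> \<le> 1" for i j s u
    unfolding kx_def ky_def by (rule abs_indicator_diff_le)+
  have I1: "((\<lambda>s. kx i s * F1 (s, y0)) has_integral F (x i, y0) - F (x0, y0)) ?I" for i
    unfolding kx_def by (rule has_integral_derivative_times_step[OF F1 x0 x])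
  have I2: "((\<lambda>u. ky j u * F2 (x0, u)) has_integral F (x0, y j) - F (x0, y0)) ?I" for j
    unfolding ky_def by (rule has_integral_derivative_times_step[OF F2 y0 y])
  have I3: "((\<lambda>u. ky j u * (F2 (x i, u) - F2 (x0, u))) has_integral
      (F (x i, y j) - F (x0, y j)) - (F (x i, y0) - F (x0, y0))) ?I" for i j
    unfolding ky_def by (rule has_integral_derivative_times_step[OF DERIV_diff[OF F2 F2] y0 y])
  have I4: "((\<lambda>s. kx i s * F12 (s, u)) has_integral F2 (x i, u) - F2 (x0, u)) ?I" for i u
    unfolding kx_def by (rule has_integral_derivative_times_step[OF F12 x0 x])
  \<comment> \<open>The factors 1 display each integrand in the form \<open>a i s * b j s * \<phi> s\<close>.\<close>
  have split: "F (x i, y j) = F (x0, y0) + integral ?I (\<lambda>s. kx i s * 1 * F1 (s, y0))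
      + integral ?I (\<lambda>u. 1 * ky j u * F2 (x0, u)) + integral ?I (\<lambda>u. ky j u * (F2 (x i, u) - F2 (x0, u)))"
    for i j
    using integral_unique[OF I1] integral_unique[OF I2] integral_unique[OF I3] by simp
  have "(\<Sum>i<n. \<Sum>j<n. c i j * F (x i, y j))
      = (\<Sum>i<n. \<Sum>j<n. c i j * F (x0, y0))
      + (\<Sum>i<n. \<Sum>j<n. c i j * integral ?I (\<lambda>s. kx i s * 1 * F1 (s, y0)))
      + (\<Sum>i<n. \<Sum>j<n. c i j * integral ?I (\<lambda>u. 1 * ky j u * F2 (x0, u)))
      + (\<Sum>i<n. \<Sum>j<n. c i j * integral ?I (\<lambda>u. ky j u * (F2 (x i, u) - F2 (x0, u))))"
    unfolding split by (simp only: distrib_left sum.distrib)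
  moreover have "\<bar>\<Sum>i<n. \<Sum>j<n. c i j * F (x0, y0)\<bar> \<le> B * \<bar>F (x0, y0)\<bar>"
    using abs_bilinear_le[OF c, of "\<lambda>_. 1" "\<lambda>_. 1" "F (x0, y0)"] by simp
  moreover have "\<bar>\<Sum>i<n. \<Sum>j<n. c i j * integral ?I (\<lambda>s. kx i s * 1 * F1 (s, y0))\<bar>
      \<le> B * integral ?I (\<lambda>s. \<bar>F1 (s, y0)\<bar>)"
    using I1 integrable_abs_slices[OF cont(2)] kx_le
    by (intro abs_sum_integral_bilinear_le[OF c]) auto
  moreover have "\<bar>\<Sum>i<n. \<Sum>j<n. c i j * integral ?I (\<lambda>u. 1 * ky j u * F2 (x0, u))\<bar>
      \<le> B * integral ?I (\<lambda>u. \<bar>F2 (x0, u)\<bar>)"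
    using I2 integrable_abs_slices[OF cont(3)] ky_le
    by (intro abs_sum_integral_bilinear_le[OF c]) auto
  moreover have "\<bar>\<Sum>i<n. \<Sum>j<n. c i j * integral ?I (\<lambda>u. ky j u * (F2 (x i, u) - F2 (x0, u)))\<bar>
      \<le> B * integral ?I (\<lambda>u. integral ?I (\<lambda>s. \<bar>F12 (s, u)\<bar>))"
    using I3 by (intro abs_sum_mixed_integral_le[OF c cont(4) kx_le ky_le I4]) blast
  ultimately have "\<bar>\<Sum>i<n. \<Sum>j<n. c i j * F (x i, y j)\<bar>
      \<le> B * (\<bar>F (x0, y0)\<bar> + integral ?I (\<lambda>s. \<bar>F1 (s, y0)\<bar>) + integral ?I (\<lambda>u. \<bar>F2 (x0, u)\<bar>)
        + integral ?I (\<lambda>u. integral ?I (\<lambda>s. \<bar>F12 (s, u)\<bar>)))"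
    unfolding distrib_left by linarith
  also have "\<dots> \<le> B * ((sq_integral_T2 F + sq_integral_T2 F1 + sq_integral_T2 F2 + sq_integral_T2 F12) / 2
      + 2 * (2*pi)\<^sup>2 + 2)"
    using base integral_abs_slices_le'(2)[OF cont(4)] bilinear_bounded_nonneg[OF c]
    by (intro mult_left_mono) argo+
  finally show ?thesis .
qed

lemma kernel_bound_periodic_C1:
  fixes F F1 F2 F12 :: "real \<times> real \<Rightarrow> real"
  assumes cont: "continuous_on UNIV F" "continuous_on UNIV F1" "continuous_on UNIV F2" "continuous_on UNIV F12"
    and periodic: "periodic_T2 F"
    and F1: "\<And>x y. ((\<lambda>s. F (s, y)) has_real_derivative F1 (x, y)) (at x)"
    and F2: "\<And>x y. ((\<lambda>u. F (x, u)) has_real_derivative F2 (x, y)) (at y)"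
    and F12: "\<And>x y. ((\<lambda>s. F2 (s, y)) has_real_derivative F12 (x, y)) (at x)"
  shows "kernel_bound F ((sq_integral_T2 F + sq_integral_T2 F1 + sq_integral_T2 F2 + sq_integral_T2 F12) / 2
    + 2 * (2*pi)\<^sup>2 + 2)"
  unfolding kernel_bound_def
proof (intro allI impI)
  fix n c B and x y :: "nat \<Rightarrow> real"
  assume c: "bilinear_bounded n c B"
  have "\<forall>i. \<exists>x'. x' \<in> {0..2*pi} \<and> (\<lambda>v. F (x', v)) = (\<lambda>v. F (x i, v))"
    using periodic_representative[of "2*pi" "\<lambda>s v. F (s, v)"] periodic
    unfolding periodic_T2_def by (metis pi_gt_zero mult_pos_pos zero_less_numeral)
  then obtain xr where xr: "\<And>i. xr i \<in> {0..2*pi}" "\<And>i v. F (xr i, v) = F (x i, v)"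
    by metis
  have "\<forall>j. \<exists>y'. y' \<in> {0..2*pi} \<and> (\<lambda>s. F (s, y')) = (\<lambda>s. F (s, y j))"
    using periodic_representative[of "2*pi" "\<lambda>v s. F (s, v)"] periodic
    unfolding periodic_T2_def by (metis pi_gt_zero mult_pos_pos zero_less_numeral)
  then obtain yr where yr: "\<And>j. yr j \<in> {0..2*pi}" "\<And>j s. F (s, yr j) = F (s, y j)"
    by metis
  have "(\<Sum>i<n. \<Sum>j<n. c i j * F (x i, y j)) = (\<Sum>i<n. \<Sum>j<n. c i j * F (xr i, yr j))"
    by (simp add: xr(2) yr(2))
  with abs_bilinear_sum_le_on_square[OF cont F1 F2 F12 c xr(1) yr(1)]
  show "\<bar>\<Sum>i<n. \<Sum>j<n. c i j * F (x i, y j)\<bar> \<le> ((sq_integral_T2 F + sq_integral_T2 F1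
      + sq_integral_T2 F2 + sq_integral_T2 F12) / 2 + 2 * (2*pi)\<^sup>2 + 2) * B"
    by (simp add: mult.commute)
qed

section \<open>Smooth functions on the torus\<close>

lemma pd_append: "pd (ds @ es) g = pd ds (pd es g)"
proof (induction ds)
  case (Cons d ds)
  then show ?case by (cases d) simp_all
qed simp

lemma deriv_periodic:
  fixes f :: "real \<Rightarrow> real"
  assumes "\<And>u. f (u + c) = f u"
  shows "deriv f (x + c) = deriv f x"
proof -
  have "(\<lambda>u. f (u + c)) = f" using assms by auto
  then show ?thesis
    unfolding deriv_def DERIV_shift by simp
qed

lemma periodic_T2_d1: "periodic_T2 g \<Longrightarrow> periodic_T2 (d1 g)"
  unfolding periodic_T2_def d1_def by (auto intro: deriv_periodic)

lemma periodic_T2_d2: "periodic_T2 g \<Longrightarrow> periodic_T2 (d2 g)"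
  unfolding periodic_T2_def d2_def by (auto intro: deriv_periodic)

lemma periodic_T2_pd: "periodic_T2 g \<Longrightarrow> periodic_T2 (pd ds g)"
proof (induction ds)
  case (Cons d ds)
  then show ?case by (cases d) (simp_all add: periodic_T2_d1 periodic_T2_d2)
qed simp

lemma smooth_T2_pd: "smooth_T2 g \<Longrightarrow> smooth_T2 (pd ds g)"
  unfolding smooth_T2_def by (simp add: periodic_T2_pd flip: pd_append)

lemma smooth_T2_continuous: "smooth_T2 g \<Longrightarrow> continuous_on UNIV g"
  unfolding smooth_T2_def using pd.simps(1) by metis

lemma smooth_T2_has_derivative_d1:
  assumes "smooth_T2 g"
  shows "((\<lambda>u. g (u, y)) has_real_derivative d1 g (x, y)) (at x)"
  using assms unfolding smooth_T2_def d1_def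
  by (metis DERIV_deriv_iff_real_differentiable case_prod_conv pd.simps(1))

lemma smooth_T2_has_derivative_d2:
  assumes "smooth_T2 g"
  shows "((\<lambda>v. g (x, v)) has_real_derivative d2 g (x, y)) (at y)"
  using assms unfolding smooth_T2_def d2_def
  by (metis DERIV_deriv_iff_real_differentiable case_prod_conv pd.simps(1))

lemma smooth_T2_d1: "smooth_T2 g \<Longrightarrow> smooth_T2 (d1 g)"
  using smooth_T2_pd[of g "[True]"] by simp

lemma smooth_T2_d2: "smooth_T2 g \<Longrightarrow> smooth_T2 (d2 g)"
  using smooth_T2_pd[of g "[False]"] by simp

lemma d2_diff_eq_integral_d2_d1:
  assumes g: "smooth_T2 g" and ab: "a \<le> b"
  shows "d2 g (b, y) - d2 g (a, y) = integral {a..b} (\<lambda>s. d2 (d1 g) (s, y))"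
proof -
  have g1: "smooth_T2 (d1 g)" by (rule smooth_T2_d1[OF g])
  have c1: "continuous_on UNIV (d1 g)" and c21: "continuous_on UNIV (d2 (d1 g))"
    by (intro smooth_T2_continuous smooth_T2_d2 g1)+
  have ftc: "integral {a..b} (\<lambda>s. d1 g (s, v)) = g (b, v) - g (a, v)" for v
    by (intro integral_unique fundamental_theorem_of_calculus ab)
      (auto simp: has_real_derivative_iff_has_vector_derivative[symmetric]
        intro: has_field_derivative_at_within smooth_T2_has_derivative_d1[OF g])
  have "((\<lambda>v. integral (cbox a b) (\<lambda>s. d1 g (s, v))) has_field_derivative
      integral (cbox a b) (\<lambda>s. d2 (d1 g) (s, y))) (at y within UNIV)"
  proof (rule leibniz_rule_field_derivative[where fx = "\<lambda>v s. d2 (d1 g) (s, v)"])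
    show "((\<lambda>v. d1 g (s, v)) has_field_derivative d2 (d1 g) (s, v)) (at v within UNIV)" for v s
      by (rule smooth_T2_has_derivative_d2[OF g1])
    show "(\<lambda>s. d1 g (s, v)) integrable_on cbox a b" for v
      by (intro integrable_continuous continuous_on_compose2[OF c1] continuous_intros) auto
    show "continuous_on (UNIV \<times> cbox a b) (\<lambda>(v, s). d2 (d1 g) (s, v))"
      unfolding case_prod_unfold by (intro continuous_on_compose2[OF c21] continuous_intros) auto
  qed auto
  then have "((\<lambda>v. g (b, v) - g (a, v)) has_field_derivative integral {a..b} (\<lambda>s. d2 (d1 g) (s, y))) (at y)"
    by (simp add: ftc cbox_interval)
  moreover have "((\<lambda>v. g (b, v) - g (a, v)) has_field_derivative d2 g (b, y) - d2 g (a, y)) (at y)"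
    by (intro DERIV_diff smooth_T2_has_derivative_d2[OF g])
  ultimately show ?thesis
    by (rule DERIV_unique[symmetric])
qed

lemma d2_d1_eq_d1_d2:
  assumes g: "smooth_T2 g"
  shows "d2 (d1 g) = d1 (d2 g)"
proof (intro ext, clarify)
  fix x y :: real
  have c21: "continuous_on UNIV (d2 (d1 g))"
    by (intro smooth_T2_continuous smooth_T2_d2 smooth_T2_d1 g)
  have x: "x \<in> {x - 1..x + 1}" "x \<in> {x - 1<..<x + 1}" by auto
  have "((\<lambda>t. integral {x - 1..t} (\<lambda>s. d2 (d1 g) (s, y))) has_real_derivative d2 (d1 g) (x, y))
      (at x within {x - 1..x + 1})"
    by (intro integral_has_real_derivative[OF _ x(1)] continuous_on_compose2[OF c21] continuous_intros)
      auto
  then have "((\<lambda>t. d2 g (x - 1, y) + integral {x - 1..t} (\<lambda>s. d2 (d1 g) (s, y))) has_real_derivative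
      d2 (d1 g) (x, y)) (at x)"
    using at_within_interior[of x "{x - 1..x + 1}"] x
    by (intro DERIV_add[where D = 0, simplified] DERIV_const) simp_all
  then have "((\<lambda>t. d2 g (t, y)) has_real_derivative d2 (d1 g) (x, y)) (at x)"
  proof (rule has_field_derivative_transform_within_open[OF _ open_greaterThanLessThan x(2)])
    show "d2 g (x - 1, y) + integral {x - 1..t} (\<lambda>s. d2 (d1 g) (s, y)) = d2 g (t, y)"
      if "t \<in> {x - 1<..<x + 1}" for t
      using d2_diff_eq_integral_d2_d1[OF g, of "x - 1" t y] that by simp
  qed
  moreover have "((\<lambda>t. d2 g (t, y)) has_real_derivative d1 (d2 g) (x, y)) (at x)"
    by (intro smooth_T2_has_derivative_d1 smooth_T2_d2 g)
  ultimately show "d2 (d1 g) (x, y) = d1 (d2 g) (x, y)"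
    by (rule DERIV_unique)
qed

section \<open>The bound on the correction term\<close>

definition kernel_constant :: "(real \<times> real \<Rightarrow> real) \<Rightarrow> real" where
  "kernel_constant h = (sq_integral_T2 h + sq_integral_T2 (d1 h) + sq_integral_T2 (d2 h)
      + sq_integral_T2 (d1 (d2 h))) / 2 + 2 * (2*pi)\<^sup>2 + 2"

lemma kernel_constant_nonneg: "kernel_constant h \<ge> 0"
  unfolding kernel_constant_def by (simp add: sq_integral_T2_nonneg add_nonneg_nonneg)

lemma kernel_bound_smooth_T2:
  assumes h: "smooth_T2 h"
  shows "kernel_bound h (kernel_constant h)"
  unfolding kernel_constant_def
proof (rule kernel_bound_periodic_C1)
  show "continuous_on UNIV h" "continuous_on UNIV (d1 h)" "continuous_on UNIV (d2 h)"
    "continuous_on UNIV (d1 (d2 h))"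
    by (intro smooth_T2_continuous smooth_T2_d1 smooth_T2_d2 h)+
  show "periodic_T2 h"
    using h by (simp add: smooth_T2_def)
  show "((\<lambda>s. h (s, y)) has_real_derivative d1 h (x, y)) (at x)"
    "((\<lambda>u. h (x, u)) has_real_derivative d2 h (x, y)) (at y)"
    "((\<lambda>s. d2 h (s, y)) has_real_derivative d1 (d2 h) (x, y)) (at x)" for x y
    by (intro smooth_T2_has_derivative_d1 smooth_T2_has_derivative_d2 smooth_T2_d2 h)+
qed

lemma sq_integral_T2_pdiff_le:
  assumes "H3_norm g \<le> 1" "a + b \<le> 3"
  shows "sq_integral_T2 (pdiff a b g) \<le> 1"
proof -
  have "sq_integral_T2 (pdiff a b g) \<le> (\<Sum>b'\<le>3 - a. sq_integral_T2 (pdiff a b' g))"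
    using assms(2) by (intro member_le_sum sq_integral_T2_nonneg) auto
  also have "\<dots> \<le> (\<Sum>a'\<le>3. \<Sum>b'\<le>3 - a'. sq_integral_T2 (pdiff a' b' g))"
    using assms(2) by (intro member_le_sum[where f = "\<lambda>a'. \<Sum>b'\<le>3 - a'. _ a' b'"] sum_nonneg
        sq_integral_T2_nonneg) auto
  also have "\<dots> \<le> 1"
    using assms(1) unfolding H3_norm_def sq_integral_T2_def[symmetric] by simp
  finally show ?thesis .
qed

lemma pdiff_low_order:
  "pdiff 1 0 g = d1 g" "pdiff 0 1 g = d2 g" "pdiff 2 0 g = d1 (d1 g)" "pdiff 1 1 g = d1 (d2 g)"
  "pdiff 0 2 g = d2 (d2 g)" "pdiff 2 1 g = d1 (d1 (d2 g))" "pdiff 1 2 g = d1 (d2 (d2 g))"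
  by (simp_all add: pdiff_def numeral_2_eq_2)

lemma kernel_bound_first_derivatives:
  assumes g: "smooth_T2 g" and H3: "H3_norm g \<le> 1"
  shows "kernel_bound (pdiff 1 0 g) (2 * (2*pi)\<^sup>2 + 4)" and "kernel_bound (pdiff 0 1 g) (2 * (2*pi)\<^sup>2 + 4)"
proof -
  have E: "sq_integral_T2 (pdiff a b g) \<le> 1" if "a + b \<le> 3" for a b
    using sq_integral_T2_pdiff_le[OF H3 that] .
  have "kernel_constant (d1 g) \<le> 2 * (2*pi)\<^sup>2 + 4"
    using E[of 1 0] E[of 2 0] E[of 1 1] E[of 2 1]
    unfolding kernel_constant_def d2_d1_eq_d1_d2[OF g] pdiff_low_order by simp
  with kernel_bound_smooth_T2[OF smooth_T2_d1[OF g]]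
  show "kernel_bound (pdiff 1 0 g) (2 * (2*pi)\<^sup>2 + 4)"
    unfolding pdiff_low_order by (rule kernel_bound_mono)
  have "kernel_constant (d2 g) \<le> 2 * (2*pi)\<^sup>2 + 4"
    using E[of 0 1] E[of 1 1] E[of 0 2] E[of 1 2]
    unfolding kernel_constant_def pdiff_low_order by simp
  with kernel_bound_smooth_T2[OF smooth_T2_d2[OF g]]
  show "kernel_bound (pdiff 0 1 g) (2 * (2*pi)\<^sup>2 + 4)"
    unfolding pdiff_low_order by (rule kernel_bound_mono)
qed

lemma abs_integral_le_length_mult:
  fixes f :: "real \<Rightarrow> real"
  assumes "0 \<le> t" and "\<And>s. s \<in> {0..t} \<Longrightarrow> \<bar>f s\<bar> \<le> M"
  shows "\<bar>integral {0..t} f\<bar> \<le> t * M"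
proof (cases "f integrable_on {0..t}")
  case True
  then have "norm (integral {0..t} f) \<le> integral {0..t} (\<lambda>s. M)"
    using assms(2) by (intro Henstock_Kurzweil_Integration.integral_norm_bound_integral) auto
  with assms(1) show ?thesis by simp
next
  case False
  have "0 \<le> M"
    using assms(2)[of 0] assms(1) by simp
  with False assms(1) show ?thesis
    by (simp add: not_integrable_integral)
qed

lemma abs_normalized_le:
  assumes "\<bar>X\<bar> \<le> K * (real n ^ 3 * S)" "0 \<le> K" "0 \<le> S"
  shows "\<bar>1 / real n ^ 3 * X\<bar> \<le> K * S"
proof (cases "n = 0")
  case False
  then have n: "real n ^ 3 > 0" by simp
  have "\<bar>1 / real n ^ 3 * X\<bar> = \<bar>X\<bar> / real n ^ 3"
    using n by (simp add: abs_mult)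
  also have "\<dots> \<le> K * (real n ^ 3 * S) / real n ^ 3"
    using assms(1) n by (intro divide_right_mono) simp_all
  also have "\<dots> = K * S"
    using n by simp
  finally show ?thesis .
qed (use assms in simp)

lemma abs_Cn_le:
  assumes \<Gamma>: "kernel_bound \<Gamma> K" "0 \<le> K" and g: "smooth_T2 g" "H3_norm g \<le> 1" and t: "0 \<le> t"
  shows "\<bar>Cn n p \<xi> \<theta> \<Gamma> t g\<bar> \<le> t * ((2 * (2*pi)\<^sup>2 + 4) * K) * (S_ijik n p \<xi> + S_ijjk n p \<xi>)"
proof -
  let ?L = "2 * (2*pi)\<^sup>2 + 4"
  have LK: "?L * K \<ge> 0"
    using \<Gamma>(2) by simp
  have "\<bar>integral {0..t} (\<lambda>s. 1 / real n ^ 3 * (\<Sum>i<n. \<Sum>j<n. \<Sum>k<n.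
      xhat p \<xi> i j * xhat p \<xi> i k * pdiff 1 0 g (\<theta> i s, \<theta> j s) * \<Gamma> (\<theta> i s, \<theta> k s)))\<bar>
      \<le> t * (?L * K * S_ijik n p \<xi>)"
  proof (intro abs_integral_le_length_mult t abs_normalized_le LK)
    fix s
    show "\<bar>\<Sum>i<n. \<Sum>j<n. \<Sum>k<n.
        xhat p \<xi> i j * xhat p \<xi> i k * pdiff 1 0 g (\<theta> i s, \<theta> j s) * \<Gamma> (\<theta> i s, \<theta> k s)\<bar>
        \<le> ?L * K * (real n ^ 3 * S_ijik n p \<xi>)"
      using abs_triple_sum_ij_ik_le[OF kernel_bound_first_derivatives(1)[OF g] \<Gamma>(1),
          where A = "\<lambda>i j k. xhat p \<xi> i j * xhat p \<xi> i k" and x = "\<lambda>i. \<theta> i s"]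
      by (simp add: S_ijik_eq_sign_sup mult.assoc)
  qed (simp add: S_ijik_eq_sign_sup sign_sup_nonneg)
  moreover have "\<bar>integral {0..t} (\<lambda>s. 1 / real n ^ 3 * (\<Sum>i<n. \<Sum>j<n. \<Sum>k<n.
      xhat p \<xi> i j * xhat p \<xi> j k * pdiff 0 1 g (\<theta> i s, \<theta> j s) * \<Gamma> (\<theta> j s, \<theta> k s)))\<bar>
      \<le> t * (?L * K * S_ijjk n p \<xi>)"
  proof (intro abs_integral_le_length_mult t abs_normalized_le LK)
    fix s
    show "\<bar>\<Sum>i<n. \<Sum>j<n. \<Sum>k<n.
        xhat p \<xi> i j * xhat p \<xi> j k * pdiff 0 1 g (\<theta> i s, \<theta> j s) * \<Gamma> (\<theta> j s, \<theta> k s)\<bar>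
        \<le> ?L * K * (real n ^ 3 * S_ijjk n p \<xi>)"
      using abs_triple_sum_ij_jk_le[OF kernel_bound_first_derivatives(2)[OF g] \<Gamma>(1),
          where A = "\<lambda>i j k. xhat p \<xi> i j * xhat p \<xi> j k" and x = "\<lambda>i. \<theta> i s"]
      by (simp add: S_ijjk_eq_sign_sup mult.assoc)
  qed (simp add: S_ijjk_eq_sign_sup sign_sup_nonneg)
  ultimately have "\<bar>Cn n p \<xi> \<theta> \<Gamma> t g\<bar> \<le> t * (?L * K * S_ijik n p \<xi>) + t * (?L * K * S_ijjk n p \<xi>)"
    unfolding Cn_def by linarith
  then show ?thesis
    by (simp add: algebra_simps)
qed

theorem mainTheorem6:
  fixes \<Gamma> :: "real \<times> real \<Rightarrow> real"
  assumes "smooth_T2 \<Gamma>"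
  shows "\<exists>C. \<forall>T>0. \<exists>N. \<forall>n\<ge>N. \<forall>(p::real) (\<xi>::nat \<Rightarrow> nat \<Rightarrow> real) (\<theta>::nat \<Rightarrow> real \<Rightarrow> real).
     n \<ge> 2 \<and> 0 < p \<and> p \<le> 1 \<and> (\<forall>i<n. \<forall>j<n. \<xi> i j \<in> {0, 1}) \<and>
     (\<forall>i<n. continuous_on {0..T} (\<theta> i)) \<longrightarrow>
     (SUP t\<in>{0..T}. Hm3_norm (Cn n p \<xi> \<theta> \<Gamma> t))
       \<le> ereal (T * C * (S_ijik n p \<xi> + S_ijjk n p \<xi>))"
proof (intro exI[of _ "(2 * (2*pi)\<^sup>2 + 4) * kernel_constant \<Gamma>"] allI impI exI[of _ 0])
  let ?C = "(2 * (2*pi)\<^sup>2 + 4) * kernel_constant \<Gamma>"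
  fix T :: real and n :: nat and p \<xi> \<theta>
  have S_nonneg: "S_ijik n p \<xi> + S_ijjk n p \<xi> \<ge> 0"
    by (simp add: S_ijik_eq_sign_sup S_ijjk_eq_sign_sup sign_sup_nonneg)
  have "\<bar>Cn n p \<xi> \<theta> \<Gamma> t g\<bar> \<le> T * ?C * (S_ijik n p \<xi> + S_ijjk n p \<xi>)"
    if "t \<in> {0..T}" "smooth_T2 g" "H3_norm g \<le> 1" for t g
  proof -
    have "\<bar>Cn n p \<xi> \<theta> \<Gamma> t g\<bar> \<le> t * ?C * (S_ijik n p \<xi> + S_ijjk n p \<xi>)"
      using that by (intro abs_Cn_le kernel_bound_smooth_T2 kernel_constant_nonneg assms) auto
    also have "\<dots> \<le> T * ?C * (S_ijik n p \<xi> + S_ijjk n p \<xi>)"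
      using that(1) S_nonneg kernel_constant_nonneg[of \<Gamma>] by (intro mult_right_mono) auto
    finally show ?thesis .
  qed
  then show "(SUP t\<in>{0..T}. Hm3_norm (Cn n p \<xi> \<theta> \<Gamma> t))
      \<le> ereal (T * ?C * (S_ijik n p \<xi> + S_ijjk n p \<xi>))"
    unfolding Hm3_norm_def by (intro SUP_least) auto
qed

end
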